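(* For every set of formulas $\Gamma$ and every formula $\phi$: if $\Gamma\vdash\phi$ then $\Gamma\vDash\phi$. That is, the logic $\vdash$ is sound with respect to the class of continuous t-norms.
   Context: Fix a countable predicate language $\mathcal L$ consisting of variables, constant symbols and predicate symbols (so terms are just variables and constants), with connectives $\to$, $\&$, the propositional constant $0$ and quantifiers $\forall,\exists$. Abbreviations: $\phi\wedge\psi$ is $\phi\&(\phi\to\psi)$; $\phi\vee\psi$ is $((\phi\to\psi)\to\psi)\wedge((\psi\to\phi)\to\phi)$; $\neg\phi$ is $\phi\to 0$; $1$ is $0\to 0$; $\beta^n$ is $\beta\&\cdots\&\beta$ ($n$ factors). $\phi(x/t)$ denotes the result of substituting the term $t$ for the free occurrences of $x$ in $\phi$. A sentence is a formula with no free variables; a theory is any set of formulas. Hájek's basic predicate logic BL$\forall$ has the axiom schemata (A1) $(\phi\to\psi)\to((\psi\to\chi)\to(\phi\to\chi))$; (A2) $(\phi\&\psi)\to\phi$; (A3) $(\phi\&\psi)\to(\psi\&\phi)$; (A4) $(\phi\&(\phi\to\psi))\to(\psi\&(\psi\to\phi))$; (A5) $(\phi\to(\psi\to\chi))\to((\phi\&\psi)\to\chi)$; (A6) $((\phi\&\psi)\to\chi)\to(\phi\to(\psi\to\chi))$; (A7) $((\phi\to\psi)\to\chi)\to(((\psi\to\phi)\to\chi)\to\chi)$; (A8) $0\to\phi$; ($\forall$1) $\forall x\phi\to\phi(x/t)$ and ($\exists$1) $\phi(x/t)\to\exists x\phi$, for $t$ substitutable for $x$ in $\phi$; ($\forall$2)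 $\forall x(\phi\to\psi)\to(\phi\to\forall x\psi)$, ($\exists$2) $\forall x(\psi\to\phi)\to(\exists x\psi\to\phi)$ and (Lin) $\forall x(\psi\vee\phi)\to((\forall x\psi)\vee\phi)$, each with $x$ not free in $\phi$; its rules are modus ponens (from $\phi$ and $\phi\to\psi$ infer $\psi$) and generalization (from $\phi$ infer $\forall x\phi$). The logic $\vdash$ extends BL$\forall$ by the axiom schema (RC) $\forall x(\chi\&\chi)\to((\forall x\chi)\&(\forall x\chi))$ for every formula $\chi$, and the infinitary rule (Inf): from all of $\phi\vee(\alpha\to\beta^n)$, $n\in\mathbb N$, infer $\phi\vee(\alpha\to(\alpha\&\beta))$, where $\phi,\alpha,\beta$ are sentences. A proof from $\Gamma$ is a sequence $(\phi_i)_{i\le\xi}$ indexed by the ordinals up to some ordinal $\xi$ such that each $\phi_i$ is an axiom of BL$\forall$, an instance of (RC), a member of $\Gamma$, or is obtained from formulas in $\{\phi_j: j<i\}$ by modus ponens, generalization, or (Inf). $\Gamma\vdash\phi$ means there is a proof from $\Gamma$ whose last member is $\phi$. Semantics: a continuous t-norm is a continuous binary operation $\cdot$ on $[0,1]$ that is commutative, associative, monotone in each argument and has $1$ as unit; it is regarded as the algebra $([0,1],\cdot,\to,\min,\max,0,1)$ where $\to$ is its residuum ($x\cdot y\le z$ iff $x\le y\to z$). For such a $\mathbf B$, a $\mathbf B$-structure $\mathbf M$ consists of a nonempty set $M$, an element $c^{\mathbf M}\in M$ for each constant $c$, and a function $P^{\mathbf M}:M^n\to[0,1]$ for each $n$-ary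 predicate $P$. For a valuation $v$ (a map from variables to $M$), $\|\phi\|^{\mathbf M,v}$ is defined inductively: $\|P(t_1,\dots,t_n)\|^{\mathbf M,v}=P^{\mathbf M}(t_1^{\mathbf M,v},\dots,t_n^{\mathbf M,v})$ (with $c^{\mathbf M,v}=c^{\mathbf M}$, $x^{\mathbf M,v}=v(x)$), $\|0\|=0$, $\&$ and $\to$ are interpreted by $\cdot$ and its residuum, $\|\forall x\psi\|^{\mathbf M,v}=\inf\{\|\psi\|^{\mathbf M,w}:w\equiv_x v\}$ and $\|\exists x\psi\|^{\mathbf M,v}=\sup\{\|\psi\|^{\mathbf M,w}:w\equiv_x v\}$, where $w\equiv_x v$ means $w$ agrees with $v$ except possibly at $x$. $\mathbf M$ is a model of $\phi$ if $\|\phi\|^{\mathbf M,v}=1$ for every valuation $v$, and a model of a set $\Gamma$ if it is a model of each member. $\Gamma\vDash\phi$ means: for every continuous t-norm $\mathbf B$ and every $\mathbf B$-structure $\mathbf M$, if $\mathbf M$ is a model of $\Gamma$ then $\mathbf M$ is a model of $\phi$. *)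

theory Defs
  imports Complex_Main "HOL-Library.Countable"
begin

datatype 'c trm = Var nat | Cst 'c

datatype ('c, 'p) fm =
    Pred 'p "'c trm list"
  | Imp "('c, 'p) fm" "('c, 'p) fm"
  | SConj "('c, 'p) fm" "('c, 'p) fm"
  | Zero
  | All nat "('c, 'p) fm"
  | Ex nat "('c, 'p) fm"

fun wff :: "('p \<Rightarrow> nat) \<Rightarrow> ('c, 'p) fm \<Rightarrow> bool" where
  "wff ar (Pred P ts) = (length ts = ar P)"
| "wff ar (Imp a b) = (wff ar a \<and> wff ar b)"
| "wff ar (SConj a b) = (wff ar a \<and> wff ar b)"
| "wff ar Zero = True"
| "wff ar (All x a) = wff ar a"
| "wff ar (Ex x a) = wff ar a"

fun tvars :: "'c trm \<Rightarrow> nat set" where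
  "tvars (Var x) = {x}"
| "tvars (Cst c) = {}"

fun fv :: "('c, 'p) fm \<Rightarrow> nat set" where
  "fv (Pred P ts) = (\<Union>t\<in>set ts. tvars t)"
| "fv (Imp a b) = fv a \<union> fv b"
| "fv (SConj a b) = fv a \<union> fv b"
| "fv Zero = {}"
| "fv (All x a) = fv a - {x}"
| "fv (Ex x a) = fv a - {x}"

definition sentence :: "('c, 'p) fm \<Rightarrow> bool" where
  "sentence a \<longleftrightarrow> fv a = {}"

fun tsubst :: "nat \<Rightarrow> 'c trm \<Rightarrow> 'c trm \<Rightarrow> 'c trm" where
  "tsubst x t (Var y) = (if y = x then t else Var y)"
| "tsubst x t (Cst c) = Cst c"

fun subst :: "nat \<Rightarrow> 'c trm \<Rightarrow> ('c, 'p) fm \<Rightarrow> ('c, 'p) fm" where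
  "subst x t (Pred P ts) = Pred P (map (tsubst x t) ts)"
| "subst x t (Imp a b) = Imp (subst x t a) (subst x t b)"
| "subst x t (SConj a b) = SConj (subst x t a) (subst x t b)"
| "subst x t Zero = Zero"
| "subst x t (All y a) = (if y = x then All y a else All y (subst x t a))"
| "subst x t (Ex y a) = (if y = x then Ex y a else Ex y (subst x t a))"

fun substable :: "nat \<Rightarrow> 'c trm \<Rightarrow> ('c, 'p) fm \<Rightarrow> bool" where
  "substable x t (Pred P ts) = True"
| "substable x t (Imp a b) = (substable x t a \<and> substable x t b)"
| "substable x t (SConj a b) = (substable x t a \<and> substable x t b)"
| "substable x t Zero = True"
| "substable x t (All y a) =
     (x \<notin> fv (All y a) \<or> (y \<notin> tvars t \<and> substable x t a))"
| "substable x t (Ex y a) =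
     (x \<notin> fv (Ex y a) \<or> (y \<notin> tvars t \<and> substable x t a))"

definition WConj :: "('c, 'p) fm \<Rightarrow> ('c, 'p) fm \<Rightarrow> ('c, 'p) fm" where
  "WConj a b = SConj a (Imp a b)"

definition Disj :: "('c, 'p) fm \<Rightarrow> ('c, 'p) fm \<Rightarrow> ('c, 'p) fm" where
  "Disj a b = WConj (Imp (Imp a b) b) (Imp (Imp b a) a)"

definition Neg :: "('c, 'p) fm \<Rightarrow> ('c, 'p) fm" where
  "Neg a = Imp a Zero"

definition One :: "('c, 'p) fm" where
  "One = Imp Zero Zero"

text \<open>fpow b n = b & ... & b with n factors (meaningful for n >= 1; fpow b 0 = 1).\<close>
fun fpow :: "('c, 'p) fm \<Rightarrow> nat \<Rightarrow> ('c, 'p) fm" where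
  "fpow b 0 = One"
| "fpow b (Suc 0) = b"
| "fpow b (Suc (Suc n)) = SConj b (fpow b (Suc n))"

inductive bl_axiom :: "('c, 'p) fm \<Rightarrow> bool" where
  A1: "bl_axiom (Imp (Imp a b) (Imp (Imp b c) (Imp a c)))"
| A2: "bl_axiom (Imp (SConj a b) a)"
| A3: "bl_axiom (Imp (SConj a b) (SConj b a))"
| A4: "bl_axiom (Imp (SConj a (Imp a b)) (SConj b (Imp b a)))"
| A5: "bl_axiom (Imp (Imp a (Imp b c)) (Imp (SConj a b) c))"
| A6: "bl_axiom (Imp (Imp (SConj a b) c) (Imp a (Imp b c)))"
| A7: "bl_axiom (Imp (Imp (Imp a b) c) (Imp (Imp (Imp b a) c) c))"
| A8: "bl_axiom (Imp Zero a)"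
| All1: "substable x t a \<Longrightarrow> bl_axiom (Imp (All x a) (subst x t a))"
| Ex1: "substable x t a \<Longrightarrow> bl_axiom (Imp (subst x t a) (Ex x a))"
| All2: "x \<notin> fv a \<Longrightarrow> bl_axiom (Imp (All x (Imp a b)) (Imp a (All x b)))"
| Ex2: "x \<notin> fv a \<Longrightarrow> bl_axiom (Imp (All x (Imp b a)) (Imp (Ex x b) a))"
| Lin: "x \<notin> fv a \<Longrightarrow> bl_axiom (Imp (All x (Disj b a)) (Disj (All x b) a))"

definition rc_axiom :: "('c, 'p) fm \<Rightarrow> bool" where
  "rc_axiom a \<longleftrightarrow> (\<exists>x c. a = Imp (All x (SConj c c)) (SConj (All x c) (All x c)))"

text \<open>A proof from G is a family of formulas f indexed by the field of a well-order r
  that has a greatest element (an ordinal segment {i. i \<le> xi}); every formula is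
  (well-formed and) an axiom, an (RC) instance, a member of G, or follows from strictly
  earlier formulas by modus ponens, generalization or (Inf).\<close>

definition before :: "'i rel \<Rightarrow> 'i \<Rightarrow> 'i \<Rightarrow> bool" where
  "before r j i \<longleftrightarrow> (j, i) \<in> r \<and> j \<noteq> i"

definition justified ::
  "('c, 'p) fm set \<Rightarrow> 'i rel \<Rightarrow> ('i \<Rightarrow> ('c, 'p) fm) \<Rightarrow> 'i \<Rightarrow> bool" where
  "justified G r f i \<longleftrightarrow>
     bl_axiom (f i) \<or> rc_axiom (f i) \<or> f i \<in> G
   \<or> (\<exists>j k. before r j i \<and> before r k i \<and> f k = Imp (f j) (f i))
   \<or> (\<exists>j x. before r j i \<and> f i = All x (f j))
   \<or> (\<exists>a b c. sentence a \<and> sentence b \<and> sentence c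
        \<and> f i = Disj a (Imp b (SConj b c))
        \<and> (\<forall>n\<ge>1. \<exists>j. before r j i \<and> f j = Disj a (Imp b (fpow c n))))"

definition is_proof ::
  "('p \<Rightarrow> nat) \<Rightarrow> ('c, 'p) fm set \<Rightarrow> 'i rel \<Rightarrow> ('i \<Rightarrow> ('c, 'p) fm) \<Rightarrow> ('c, 'p) fm \<Rightarrow> bool" where
  "is_proof ar G r f a \<longleftrightarrow>
     Well_order r \<and>
     (\<exists>l\<in>Field r. (\<forall>i\<in>Field r. (i, l) \<in> r) \<and> f l = a) \<and>
     (\<forall>i\<in>Field r. wff ar (f i) \<and> justified G r f i)"

definition provable ::
  "'i itself \<Rightarrow> ('p \<Rightarrow> nat) \<Rightarrow> ('c, 'p) fm set \<Rightarrow> ('c, 'p) fm \<Rightarrow> bool" where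
  "provable _ ar G a \<longleftrightarrow> (\<exists>(r :: 'i rel) f. is_proof ar G r f a)"

definition cont_tnorm :: "(real \<Rightarrow> real \<Rightarrow> real) \<Rightarrow> bool" where
  "cont_tnorm T \<longleftrightarrow>
     (\<forall>x\<in>{0..1}. \<forall>y\<in>{0..1}. T x y \<in> {0..1})
   \<and> (\<forall>x\<in>{0..1}. \<forall>y\<in>{0..1}. T x y = T y x)
   \<and> (\<forall>x\<in>{0..1}. \<forall>y\<in>{0..1}. \<forall>z\<in>{0..1}. T (T x y) z = T x (T y z))
   \<and> (\<forall>x\<in>{0..1}. \<forall>y\<in>{0..1}. \<forall>z\<in>{0..1}. x \<le> y \<longrightarrow> T x z \<le> T y z)
   \<and> (\<forall>x\<in>{0..1}. T x 1 = x)
   \<and> continuous_on ({0..1} \<times> {0..1}) (\<lambda>(x, y). T x y)"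

definition residuum :: "(real \<Rightarrow> real \<Rightarrow> real) \<Rightarrow> real \<Rightarrow> real \<Rightarrow> real" where
  "residuum T x y = Sup {z \<in> {0..1}. T z x \<le> y}"

text \<open>A structure with universe the type 'a (nonempty by construction).\<close>
datatype ('a, 'c, 'p) struc = Struc (cint: "'c \<Rightarrow> 'a") (pint: "'p \<Rightarrow> 'a list \<Rightarrow> real")

definition is_struc :: "('p \<Rightarrow> nat) \<Rightarrow> ('a, 'c, 'p) struc \<Rightarrow> bool" where
  "is_struc ar M \<longleftrightarrow> (\<forall>P xs. length xs = ar P \<longrightarrow> pint M P xs \<in> {0..1})"

fun teval :: "('a, 'c, 'p) struc \<Rightarrow> (nat \<Rightarrow> 'a) \<Rightarrow> 'c trm \<Rightarrow> 'a" where
  "teval M v (Var x) = v x"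
| "teval M v (Cst c) = cint M c"

fun eval :: "(real \<Rightarrow> real \<Rightarrow> real) \<Rightarrow> ('a, 'c, 'p) struc \<Rightarrow> (nat \<Rightarrow> 'a)
               \<Rightarrow> ('c, 'p) fm \<Rightarrow> real" where
  "eval T M v (Pred P ts) = pint M P (map (teval M v) ts)"
| "eval T M v (Imp a b) = residuum T (eval T M v a) (eval T M v b)"
| "eval T M v (SConj a b) = T (eval T M v a) (eval T M v b)"
| "eval T M v Zero = 0"
| "eval T M v (All x a) = Inf ((\<lambda>d. eval T M (v(x := d)) a) ` UNIV)"
| "eval T M v (Ex x a) = Sup ((\<lambda>d. eval T M (v(x := d)) a) ` UNIV)"

definition is_model :: "(real \<Rightarrow> real \<Rightarrow> real) \<Rightarrow> ('a, 'c, 'p) struc \<Rightarrow> ('c, 'p) fm \<Rightarrow> bool" where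
  "is_model T M a \<longleftrightarrow> (\<forall>v. eval T M v a = 1)"

text \<open>G \<Turnstile> a, for structures whose universe is (in bijection with) the type 'a.\<close>
definition sem_conseq ::
  "'a itself \<Rightarrow> ('p \<Rightarrow> nat) \<Rightarrow> ('c, 'p) fm set \<Rightarrow> ('c, 'p) fm \<Rightarrow> bool" where
  "sem_conseq _ ar G a \<longleftrightarrow>
     (\<forall>T (M :: ('a, 'c, 'p) struc). cont_tnorm T \<longrightarrow> is_struc ar M \<longrightarrow>
        (\<forall>g\<in>G. is_model T M g) \<longrightarrow> is_model T M a)"

end

theory Submission
  imports Defs "HOL-Analysis.Analysis"
begin

text \<open>Every line of a (possibly transfinite) proof is valid in every model of G, by
  well-founded induction along the proof. For the axioms of BL this is the fact that [0,1] with
  a continuous t-norm and its residuum is a BL-algebra: the one non-trivial identity,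
  divisibility x * (x \<rightarrow> y) = min x y, follows from the intermediate value theorem,
  and it also makes the defined disjunction the maximum. By continuity, x \<mapsto> x * x
  commutes with infima, which gives (RC). For (Inf), the powers y^n decrease to an idempotent e;
  if x \<le> y^n for all n then x \<le> e, and e absorbs x since x = e * z for some z, so that
  x = x * e \<le> x * y.\<close>

section \<open>Substitution\<close>

lemma teval_cong: "\<forall>z\<in>tvars t. v z = w z \<Longrightarrow> teval M v t = teval M w t"
  by (cases t) auto

lemma eval_cong: "\<forall>z\<in>fv a. v z = w z \<Longrightarrow> eval T M v a = eval T M w a"
proof (induction a arbitrary: v w)
  case (Pred P ts)
  then have "map (teval M v) ts = map (teval M w) ts" by (auto intro: teval_cong)
  then show ?case by (simp only: eval.simps)
next
  case (Imp a b)
  then have "eval T M v a = eval T M w a" "eval T M v b = eval T M w b"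
    by (auto intro!: Imp.IH)
  then show ?case by simp
next
  case (SConj a b)
  then have "eval T M v a = eval T M w a" "eval T M v b = eval T M w b"
    by (auto intro!: SConj.IH)
  then show ?case by simp
next
  case (All x a)
  then have "eval T M (v(x := d)) a = eval T M (w(x := d)) a" for d
    by (intro All.IH) auto
  then show ?case by simp
next
  case (Ex x a)
  then have "eval T M (v(x := d)) a = eval T M (w(x := d)) a" for d
    by (intro Ex.IH) auto
  then show ?case by simp
qed simp

lemma eval_upd_nonfree: "x \<notin> fv a \<Longrightarrow> eval T M (v(x := d)) a = eval T M v a"
  by (rule eval_cong) auto

lemma wff_fpow: "wff ar c \<Longrightarrow> wff ar (fpow c n)"
  by (induction c n rule: fpow.induct) (auto simp: One_def)

lemma tsubst_nonfree: "x \<notin> tvars s \<Longrightarrow> tsubst x t s = s"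
  by (cases s) auto

lemma subst_nonfree: "x \<notin> fv a \<Longrightarrow> subst x t a = a"
  by (induction a) (auto intro!: map_idI tsubst_nonfree)

lemma teval_tsubst: "teval M v (tsubst x t s) = teval M (v(x := teval M v t)) s"
  by (cases s) auto

lemma eval_upd_subst:
  assumes "y \<noteq> x" "y \<notin> tvars t"
    and subst_b: "\<And>v. eval T M v (subst x t b) = eval T M (v(x := teval M v t)) b"
  shows "eval T M (v(y := d)) (subst x t b) = eval T M (v(x := teval M v t, y := d)) b"
proof -
  have "teval M (v(y := d)) t = teval M v t" using assms(2) by (intro teval_cong) simp
  then show ?thesis using subst_b[of "v(y := d)"] assms(1) by (metis fun_upd_twist)
qed

lemma eval_subst:
  "substable x t a \<Longrightarrow> eval T M v (subst x t a) = eval T M (v(x := teval M v t)) a"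
proof (induction a arbitrary: v)
  case (Pred P ts)
  then show ?case by (simp add: teval_tsubst comp_def fun_upd_def)
next
  case (All y b)
  consider "x \<notin> fv (All y b)" | "y \<noteq> x" "y \<notin> tvars t" "substable x t b"
    using All.prems by auto
  then show ?case
  proof cases
    case 1
    then have "subst x t (All y b) = All y b" by (rule subst_nonfree)
    then show ?thesis by (simp only:) (rule eval_cong, use 1 in auto)
  next
    case 2
    then show ?thesis using eval_upd_subst[OF 2(1,2) All.IH[OF 2(3)]] by (simp add: fun_upd_def)
  qed
next
  case (Ex y b)
  consider "x \<notin> fv (Ex y b)" | "y \<noteq> x" "y \<notin> tvars t" "substable x t b"
    using Ex.prems by auto
  then show ?case
  proof cases
    case 1
    then have "subst x t (Ex y b) = Ex y b" by (rule subst_nonfree)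
    then show ?thesis by (simp only:) (rule eval_cong, use 1 in auto)
  next
    case 2
    then show ?thesis using eval_upd_subst[OF 2(1,2) Ex.IH[OF 2(3)]] by (simp add: fun_upd_def)
  qed
qed simp_all

lemma INF_in_unit_interval:
  fixes q :: "'a \<Rightarrow> real"
  assumes "\<And>d. q d \<in> {0..1}"
  shows "(INF d. q d) \<in> {0..1}"
proof -
  have "bdd_below (range q)" using assms by (auto intro!: bdd_belowI[of _ 0])
  then have "(INF d. q d) \<le> q undefined" by (rule cINF_lower) simp
  moreover have "0 \<le> (INF d. q d)" using assms by (auto intro!: cINF_greatest)
  ultimately show ?thesis using assms[of undefined] by auto
qed

lemma SUP_in_unit_interval:
  fixes q :: "'a \<Rightarrow> real"
  assumes "\<And>d. q d \<in> {0..1}"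
  shows "(SUP d. q d) \<in> {0..1}"
proof -
  have "bdd_above (range q)" using assms by (auto intro!: bdd_aboveI[of _ 1])
  then have "q undefined \<le> (SUP d. q d)" by (rule cSUP_upper[rotated]) simp
  moreover have "(SUP d. q d) \<le> 1" using assms by (auto intro!: cSUP_least)
  ultimately show ?thesis using assms[of undefined] by auto
qed

lemma INF_max_le_max_INF:
  fixes q :: "'a \<Rightarrow> real"
  assumes "bdd_below (range q)"
  shows "(INF d. max (q d) p) \<le> max (INF d. q d) p"
proof (cases "(INF d. max (q d) p) \<le> p")
  case False
  have "bdd_below (range (\<lambda>d. max (q d) p))"
    using assms by (auto simp: bdd_below_def le_max_iff_disj)
  then have "(INF d. max (q d) p) \<le> q d" for d
    using False cINF_lower[of "\<lambda>d. max (q d) p" UNIV d] by auto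
  then have "(INF d. max (q d) p) \<le> (INF d. q d)" by (intro cINF_greatest) auto
  then show ?thesis by simp
qed simp

lemma INF_comp_le_continuous:
  fixes g :: "real \<Rightarrow> real" and q :: "'a \<Rightarrow> real"
  assumes g: "continuous_on {a..b} g" and q: "\<And>d. q d \<in> {a..b}"
  shows "(INF d. g (q d)) \<le> g (INF d. q d)"
proof -
  have "bdd_below (g ` {a..b})"
    using compact_continuous_image[OF g compact_Icc] by (simp add: bounded_imp_bdd_below compact_imp_bounded)
  moreover have "range (\<lambda>d. g (q d)) \<subseteq> g ` {a..b}" using q by auto
  ultimately have "bdd_below (range (\<lambda>d. g (q d)))" by (rule bdd_below_mono)
  then have "g ` range q \<subseteq> {(INF d. g (q d))..}"
    by (auto intro: cINF_lower)
  moreover have "closure (range q) \<subseteq> {a..b}"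
    using q by (intro closure_minimal) auto
  moreover have "(INF d. q d) \<in> closure (range q)"
    using q by (intro closure_contains_Inf) (auto intro!: bdd_belowI[of _ a])
  ultimately show ?thesis
    using image_closure_subset[of "range q" g "{(INF d. g (q d))..}"]
      continuous_on_subset[OF g] by auto
qed

section \<open>Continuous t-norms\<close>

primrec tpow :: "(real \<Rightarrow> real \<Rightarrow> real) \<Rightarrow> real \<Rightarrow> nat \<Rightarrow> real" where
  "tpow T y 0 = 1"
| "tpow T y (Suc n) = T y (tpow T y n)"

locale tnorm =
  fixes T :: "real \<Rightarrow> real \<Rightarrow> real"
  assumes cont_tnorm: "cont_tnorm T"
begin

lemma T_closed: "x \<in> {0..1} \<Longrightarrow> y \<in> {0..1} \<Longrightarrow> T x y \<in> {0..1}"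
  and T_commute: "x \<in> {0..1} \<Longrightarrow> y \<in> {0..1} \<Longrightarrow> T x y = T y x"
  and T_assoc: "x \<in> {0..1} \<Longrightarrow> y \<in> {0..1} \<Longrightarrow> z \<in> {0..1} \<Longrightarrow> T (T x y) z = T x (T y z)"
  and T_mono_left:
    "x \<in> {0..1} \<Longrightarrow> y \<in> {0..1} \<Longrightarrow> z \<in> {0..1} \<Longrightarrow> x \<le> y \<Longrightarrow> T x z \<le> T y z"
  and T_right_neutral: "x \<in> {0..1} \<Longrightarrow> T x 1 = x"
  and T_continuous: "continuous_on ({0..1} \<times> {0..1}) (\<lambda>(x, y). T x y)"
  using cont_tnorm unfolding cont_tnorm_def by blast+

lemma T_mono_right:
  "x \<in> {0..1} \<Longrightarrow> y \<in> {0..1} \<Longrightarrow> z \<in> {0..1} \<Longrightarrow> x \<le> y \<Longrightarrow> T z x \<le> T z y"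
  using T_mono_left T_commute by metis

lemma T_left_neutral: "x \<in> {0..1} \<Longrightarrow> T 1 x = x"
  using T_right_neutral T_commute by fastforce

lemma T_le_left: "x \<in> {0..1} \<Longrightarrow> y \<in> {0..1} \<Longrightarrow> T x y \<le> x"
  using T_mono_right[of y 1 x] T_right_neutral by auto

lemma T_le_right: "x \<in> {0..1} \<Longrightarrow> y \<in> {0..1} \<Longrightarrow> T x y \<le> y"
  using T_le_left T_commute by metis

lemma T_left_zero: "x \<in> {0..1} \<Longrightarrow> T 0 x = 0"
  using T_le_left[of 0 x] T_closed[of 0 x] by auto

lemma continuous_on_T_compose:
  assumes "continuous_on {0..1} f" "continuous_on {0..1} g"
    and "\<And>z. z \<in> {0..1} \<Longrightarrow> f z \<in> {0..1}"
    and "\<And>z. z \<in> {0..1} \<Longrightarrow> g z \<in> {0..1}"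
  shows "continuous_on {0..1} (\<lambda>z. T (f z) (g z))"
proof -
  have "continuous_on {0..1} (\<lambda>z. (\<lambda>(x, y). T x y) (f z, g z))"
    using continuous_on_compose2[OF T_continuous continuous_on_Pair[OF assms(1,2)]] assms(3,4)
    by (simp add: image_subset_iff)
  then show ?thesis by simp
qed

lemma T_factor_exists:
  assumes x: "x \<in> {0..1}" and y: "y \<in> {0..1}" and "y \<le> x"
  shows "\<exists>z\<in>{0..1}. T x z = y"
proof -
  have "continuous_on {0..1} (\<lambda>z. T x z)"
    using continuous_on_T_compose[OF continuous_on_const[of _ x] continuous_on_id] x by auto
  moreover have "T x 0 \<le> y" "y \<le> T x 1"
    using T_commute[of x 0] T_left_zero T_right_neutral x y \<open>y \<le> x\<close> by auto
  ultimately show ?thesis using IVT'[of "\<lambda>z. T x z" 0 y 1] by auto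
qed

lemma residuum_attained:
  assumes x: "x \<in> {0..1}" and y: "y \<in> {0..1}"
  shows "residuum T x y \<in> {z \<in> {0..1}. T z x \<le> y}"
proof -
  let ?S = "{z \<in> {0..1}. T z x \<le> y}"
  have "0 \<in> ?S" using T_left_zero x y by auto
  then have "?S \<noteq> {}" by blast
  moreover have "bdd_above ?S" by (auto intro!: bdd_aboveI[of _ 1])
  moreover have "continuous_on {0..1} (\<lambda>z. T z x)"
    using continuous_on_T_compose[OF continuous_on_id continuous_on_const[of _ x]] x by auto
  then have "closed ({0..1} \<inter> (\<lambda>z. T z x) -` {..y})"
    by (rule continuous_closed_preimage) auto
  moreover have "{0..1} \<inter> (\<lambda>z. T z x) -` {..y} = ?S" by auto
  ultimately have "Sup ?S \<in> ?S" by (metis closed_contains_Sup)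
  then show ?thesis unfolding residuum_def .
qed

lemma residuum_closed: "x \<in> {0..1} \<Longrightarrow> y \<in> {0..1} \<Longrightarrow> residuum T x y \<in> {0..1}"
  using residuum_attained by blast

lemma residuation:
  assumes x: "x \<in> {0..1}" and y: "y \<in> {0..1}" and z: "z \<in> {0..1}"
  shows "T z x \<le> y \<longleftrightarrow> z \<le> residuum T x y"
proof
  assume "T z x \<le> y"
  then show "z \<le> residuum T x y"
    unfolding residuum_def using z by (intro cSup_upper) (auto intro!: bdd_aboveI[of _ 1])
next
  assume "z \<le> residuum T x y"
  then have "T z x \<le> T (residuum T x y) x"
    using T_mono_left x z residuum_closed[OF x y] by blast
  also have "\<dots> \<le> y" using residuum_attained[OF x y] by auto
  finally show "T z x \<le> y" .
qed

lemma T_residuum_le: "x \<in> {0..1} \<Longrightarrow> y \<in> {0..1} \<Longrightarrow> T (residuum T x y) x \<le> y"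
  using residuation[of x y "residuum T x y"] residuum_closed by auto

lemma residuum_eq_one_iff: "x \<in> {0..1} \<Longrightarrow> y \<in> {0..1} \<Longrightarrow> residuum T x y = 1 \<longleftrightarrow> x \<le> y"
  using residuation[of x y 1] T_left_neutral residuum_closed[of x y] by auto

lemma residuum_one_left: "y \<in> {0..1} \<Longrightarrow> residuum T 1 y = y"
  using residuation[of 1 y y] residuation[of 1 y "residuum T 1 y"] residuum_closed[of 1 y] T_right_neutral
  by (metis atLeastAtMost_iff order_antisym order_refl zero_le_one)

text \<open>Divisibility; it rests on the intermediate value theorem (T_factor_exists).\<close>
lemma T_residuum:
  assumes x: "x \<in> {0..1}" and y: "y \<in> {0..1}"
  shows "T x (residuum T x y) = min x y"
proof (cases "x \<le> y")
  case True
  then show ?thesis using residuum_eq_one_iff[OF x y] T_right_neutral[OF x] by simp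
next
  case False
  then obtain z where z: "z \<in> {0..1}" "T x z = y" using T_factor_exists x y by force
  then have "z \<le> residuum T x y" using residuation x y T_commute by auto
  then have "y \<le> T x (residuum T x y)" using T_mono_right z x residuum_closed[OF x y] by metis
  moreover have "T x (residuum T x y) \<le> y"
    using T_residuum_le[OF x y] T_commute[OF x residuum_closed[OF x y]] by simp
  ultimately show ?thesis using False by auto
qed

lemma residuum_transitivity:
  assumes p: "p \<in> {0..1}" and q: "q \<in> {0..1}" and r: "r \<in> {0..1}"
  shows "residuum T p q \<le> residuum T (residuum T q r) (residuum T p r)"
proof -
  let ?u = "residuum T p q" and ?w = "residuum T q r"
  have u: "?u \<in> {0..1}" and w: "?w \<in> {0..1}" using residuum_closed p q r by auto
  have "T (T ?u ?w) p = T ?w (T ?u p)" using T_assoc T_commute u w p by metis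
  also have "\<dots> \<le> T ?w q" using T_mono_right[OF T_closed[OF u p] q w] T_residuum_le[OF p q] by simp
  also have "\<dots> \<le> r" using T_residuum_le[OF q r] by simp
  finally have "T ?u ?w \<le> residuum T p r" using residuation[OF p r T_closed[OF u w]] by simp
  then show ?thesis using residuation[OF w residuum_closed[OF p r] u] by simp
qed

lemma residuum_T:
  assumes p: "p \<in> {0..1}" and q: "q \<in> {0..1}" and r: "r \<in> {0..1}"
  shows "residuum T (T p q) r = residuum T p (residuum T q r)"
proof -
  have "z \<le> residuum T (T p q) r \<longleftrightarrow> z \<le> residuum T p (residuum T q r)"
    if z: "z \<in> {0..1}" for z
    using residuation[OF T_closed[OF p q] r z] residuation[OF p residuum_closed[OF q r] z]
      residuation[OF q r T_closed[OF z p]] T_assoc[OF z p q] by simp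
  then show ?thesis
    using residuum_closed[OF T_closed[OF p q] r] residuum_closed[OF p residuum_closed[OF q r]]
    by (meson antisym order_refl)
qed

lemma residuum_prelinearity:
  assumes p: "p \<in> {0..1}" and q: "q \<in> {0..1}" and r: "r \<in> {0..1}"
  shows "residuum T (residuum T p q) r \<le> residuum T (residuum T (residuum T q p) r) r"
proof -
  let ?u = "residuum T (residuum T p q) r" and ?w = "residuum T (residuum T q p) r"
  have u: "?u \<in> {0..1}" and w: "?w \<in> {0..1}" using residuum_closed p q r by auto
  have "T ?u ?w \<le> r"
  proof (cases "p \<le> q")
    case True
    then have "?u = r" using residuum_eq_one_iff[OF p q] residuum_one_left[OF r] by simp
    then show ?thesis using T_le_left[OF r w] by simp
  next
    case False
    then have "?w = r" using residuum_eq_one_iff[OF q p] residuum_one_left[OF r] by simp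
    then show ?thesis using T_le_right[OF u r] by simp
  qed
  then show ?thesis using residuation[OF w r u] by simp
qed

lemma min_residuum_residuum_eq_max:
  assumes p: "p \<in> {0..1}" and q: "q \<in> {0..1}"
  shows "min (residuum T (residuum T p q) q) (residuum T (residuum T q p) p) = max p q"
proof -
  have ge: "b \<le> residuum T (residuum T b a) a" if a: "a \<in> {0..1}" and b: "b \<in> {0..1}" for a b
    using T_residuum[OF b a] residuation[OF residuum_closed[OF b a] a b] by simp
  show ?thesis
  proof (cases "p \<le> q")
    case True
    then have "residuum T (residuum T p q) q = q"
      using residuum_eq_one_iff[OF p q] residuum_one_left[OF q] by simp
    then show ?thesis using ge[OF p q] True residuum_closed[OF residuum_closed[OF q p] p] by simp
  next
    case False
    then have "residuum T (residuum T q p) p = p"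
      using residuum_eq_one_iff[OF q p] residuum_one_left[OF p] by simp
    then show ?thesis using ge[OF q p] False residuum_closed[OF residuum_closed[OF p q] q] by simp
  qed
qed


lemma continuous_on_T_self: "continuous_on {0..1} (\<lambda>z. T z z)"
  by (rule continuous_on_T_compose) (auto intro: continuous_on_id)

lemma tpow_closed: "y \<in> {0..1} \<Longrightarrow> tpow T y n \<in> {0..1}"
proof (induction n)
  case (Suc n)
  then show ?case using T_closed[of y "tpow T y n"] by simp
qed simp

lemma tpow_add: "y \<in> {0..1} \<Longrightarrow> tpow T y (m + n) = T (tpow T y m) (tpow T y n)"
proof (induction m)
  case 0
  then show ?case using T_left_neutral[OF tpow_closed] by simp
next
  case (Suc m)
  then show ?case using T_assoc[OF _ tpow_closed tpow_closed] by simp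
qed

lemma tpow_converges_to_idempotent:
  assumes y: "y \<in> {0..1}"
  obtains e where "e \<in> {0..1}" "tpow T y \<longlonglongrightarrow> e" "T e e = e" "e \<le> y"
proof -
  have "decseq (tpow T y)"
    unfolding decseq_Suc_iff using T_le_right tpow_closed y by simp
  then obtain e where lim: "tpow T y \<longlonglongrightarrow> e" and le: "\<And>n. e \<le> tpow T y n"
    using decseq_convergent[of "tpow T y" 0] tpow_closed[OF y] by auto
  have "e \<le> y" using le[of 1] T_right_neutral y by simp
  moreover have e: "e \<in> {0..1}"
    using LIMSEQ_le_const[OF lim, of 0] tpow_closed[OF y] \<open>e \<le> y\<close> y by auto
  moreover have "T e e = e"
  proof (rule LIMSEQ_unique)
    show "(\<lambda>n. tpow T y (n + n)) \<longlonglongrightarrow> e"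
      using LIMSEQ_subseq_LIMSEQ[OF lim, of "\<lambda>n. n + n"] by (simp add: strict_mono_def o_def)
    have "(\<lambda>n. T (tpow T y n) (tpow T y n)) \<longlonglongrightarrow> T e e"
      using continuous_on_tendsto_compose[OF continuous_on_T_self lim e] tpow_closed[OF y] by simp
    then show "(\<lambda>n. tpow T y (n + n)) \<longlonglongrightarrow> T e e"
      by (simp add: tpow_add[OF y])
  qed
  ultimately show thesis using that lim by blast
qed

lemma T_idempotent_absorb:
  assumes e: "e \<in> {0..1}" "T e e = e" and x: "x \<in> {0..1}" "x \<le> e"
  shows "T x e = x"
proof -
  obtain z where z: "z \<in> {0..1}" "T e z = x" using T_factor_exists e x by blast
  have "T x e = T (T e z) e" using z by simp
  also have "\<dots> = T e (T z e)" by (rule T_assoc[OF e(1) z(1) e(1)])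
  also have "\<dots> = T e (T e z)" using T_commute[OF z(1) e(1)] by (simp only:)
  also have "\<dots> = T (T e e) z" by (rule T_assoc[OF e(1) e(1) z(1), symmetric])
  also have "\<dots> = x" using e(2) z(2) by simp
  finally show ?thesis .
qed

text \<open>The semantic content of the rule (Inf).\<close>
lemma le_T_if_le_tpow:
  assumes x: "x \<in> {0..1}" and y: "y \<in> {0..1}" and le: "\<And>n. n \<ge> 1 \<Longrightarrow> x \<le> tpow T y n"
  shows "x \<le> T x y"
proof -
  obtain e where e: "e \<in> {0..1}" "tpow T y \<longlonglongrightarrow> e" "T e e = e" "e \<le> y"
    using tpow_converges_to_idempotent[OF y] .
  have "x \<le> e" using LIMSEQ_le_const[OF e(2), of x] le by auto
  then have "x = T x e" using T_idempotent_absorb e x by simp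
  also have "\<dots> \<le> T x y" using T_mono_right e y x by blast
  finally show ?thesis .
qed

lemma INF_residuum_le_residuum_INF:
  fixes q :: "'a \<Rightarrow> real"
  assumes p: "p \<in> {0..1}" and q: "\<And>d. q d \<in> {0..1}"
  shows "(INF d. residuum T p (q d)) \<le> residuum T p (INF d. q d)"
proof -
  let ?z = "INF d. residuum T p (q d)"
  have z: "?z \<in> {0..1}" by (rule INF_in_unit_interval) (rule residuum_closed[OF p q])
  have bdd: "bdd_below (range (\<lambda>d. residuum T p (q d)))"
    using residuum_closed[OF p q] by (auto intro!: bdd_belowI[of _ 0])
  have "T ?z p \<le> q d" for d
  proof -
    have "?z \<le> residuum T p (q d)" by (rule cINF_lower[OF bdd]) simp
    then show ?thesis using residuation[OF p q z] by simp
  qed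
  then have "T ?z p \<le> (INF d. q d)" by (intro cINF_greatest) auto
  moreover have "(INF d. q d) \<in> {0..1}" by (rule INF_in_unit_interval) (rule q)
  ultimately show ?thesis using residuation[OF p _ z] by simp
qed

lemma INF_residuum_le_residuum_SUP:
  fixes q :: "'a \<Rightarrow> real"
  assumes p: "p \<in> {0..1}" and q: "\<And>d. q d \<in> {0..1}"
  shows "(INF d. residuum T (q d) p) \<le> residuum T (SUP d. q d) p"
proof -
  let ?z = "INF d. residuum T (q d) p" and ?s = "SUP d. q d"
  have z: "?z \<in> {0..1}" by (rule INF_in_unit_interval) (rule residuum_closed[OF q p])
  have s: "?s \<in> {0..1}" by (rule SUP_in_unit_interval) (rule q)
  have bdd: "bdd_below (range (\<lambda>d. residuum T (q d) p))"
    using residuum_closed[OF q p] by (auto intro!: bdd_belowI[of _ 0])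
  have "q d \<le> residuum T ?z p" for d
  proof -
    have "?z \<le> residuum T (q d) p" by (rule cINF_lower[OF bdd]) simp
    then have "T (q d) ?z \<le> p" using residuation[OF q p z] T_commute[OF z q] by simp
    then show ?thesis using residuation[OF z p q] by simp
  qed
  then have "?s \<le> residuum T ?z p" by (intro cSUP_least) auto
  then have "T ?z ?s \<le> p" using residuation[OF z p s] T_commute[OF z s] by simp
  then show ?thesis using residuation[OF s p z] by simp
qed

end

section \<open>Soundness\<close>

locale tnorm_structure = tnorm T for T :: "real \<Rightarrow> real \<Rightarrow> real" +
  fixes ar :: "'p \<Rightarrow> nat" and M :: "('a, 'c, 'p) struc"
  assumes is_struc: "is_struc ar M"
begin

lemma eval_closed: "wff ar a \<Longrightarrow> eval T M v a \<in> {0..1}"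
proof (induction a arbitrary: v)
  case (Pred P ts)
  then show ?case using is_struc unfolding is_struc_def by simp
next
  case (Imp a b)
  then have "eval T M v a \<in> {0..1}" "eval T M v b \<in> {0..1}" by simp_all
  then show ?case unfolding eval.simps by (rule residuum_closed)
next
  case (SConj a b)
  then have "eval T M v a \<in> {0..1}" "eval T M v b \<in> {0..1}" by simp_all
  then show ?case unfolding eval.simps by (rule T_closed)
next
  case (All x a)
  then show ?case unfolding eval.simps by (intro INF_in_unit_interval) simp
next
  case (Ex x a)
  then show ?case unfolding eval.simps by (intro SUP_in_unit_interval) simp
qed simp

lemma eval_Imp_eq_one_iff:
  "wff ar (Imp a b) \<Longrightarrow> eval T M v (Imp a b) = 1 \<longleftrightarrow> eval T M v a \<le> eval T M v b"
  using residuum_eq_one_iff[OF eval_closed eval_closed] by simp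

lemma eval_Disj:
  "wff ar a \<Longrightarrow> wff ar b \<Longrightarrow> eval T M v (Disj a b) = max (eval T M v a) (eval T M v b)"
  unfolding Disj_def WConj_def
  using T_residuum[OF residuum_closed[OF residuum_closed[OF eval_closed eval_closed] eval_closed]
      residuum_closed[OF residuum_closed[OF eval_closed eval_closed] eval_closed]]
    min_residuum_residuum_eq_max[OF eval_closed eval_closed]
  by simp

lemma eval_fpow: "wff ar c \<Longrightarrow> eval T M v (fpow c n) = tpow T (eval T M v c) n"
proof (induction c n rule: fpow.induct)
  case (1 c)
  then show ?case using residuum_eq_one_iff[of 0 0] by (simp add: One_def)
next
  case (2 c)
  then show ?case using T_right_neutral[OF eval_closed] by simp
qed simp

lemma bdd_below_eval_upd: "wff ar a \<Longrightarrow> bdd_below (range (\<lambda>d. eval T M (v(x := d)) a))"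
  using eval_closed by (auto intro!: bdd_belowI[of _ 0])

lemma bdd_above_eval_upd: "wff ar a \<Longrightarrow> bdd_above (range (\<lambda>d. eval T M (v(x := d)) a))"
  using eval_closed by (auto intro!: bdd_aboveI[of _ 1])

lemma bl_axiom_valid:
  assumes w: "wff ar \<phi>" and ax: "bl_axiom \<phi>"
  shows "eval T M v \<phi> = 1"
  using ax
proof (cases rule: bl_axiom.cases)
  case (A1 a b c)
  show ?thesis unfolding A1 eval_Imp_eq_one_iff[OF w[unfolded A1]]
    using w A1 residuum_transitivity[OF eval_closed eval_closed eval_closed] by (simp)
next
  case (A2 a b)
  show ?thesis unfolding A2 eval_Imp_eq_one_iff[OF w[unfolded A2]]
    using w A2 T_le_left[OF eval_closed eval_closed] by (simp)
next
  case (A3 a b)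
  show ?thesis unfolding A3 eval_Imp_eq_one_iff[OF w[unfolded A3]]
    using w A3 T_commute[OF eval_closed eval_closed] by (simp)
next
  case (A4 a b)
  show ?thesis unfolding A4 eval_Imp_eq_one_iff[OF w[unfolded A4]]
    using w A4 T_residuum[OF eval_closed eval_closed] by (simp add: min.commute)
next
  case (A5 a b c)
  show ?thesis unfolding A5 eval_Imp_eq_one_iff[OF w[unfolded A5]]
    using w A5 residuum_T[OF eval_closed eval_closed eval_closed] by (simp)
next
  case (A6 a b c)
  show ?thesis unfolding A6 eval_Imp_eq_one_iff[OF w[unfolded A6]]
    using w A6 residuum_T[OF eval_closed eval_closed eval_closed] by (simp)
next
  case (A7 a b c)
  show ?thesis unfolding A7 eval_Imp_eq_one_iff[OF w[unfolded A7]]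
    using w A7 residuum_prelinearity[OF eval_closed eval_closed eval_closed] by (simp)
next
  case (A8 a)
  show ?thesis unfolding A8 eval_Imp_eq_one_iff[OF w[unfolded A8]]
    using w A8 eval_closed by (simp)
next
  case (All1 x t a)
  show ?thesis unfolding All1 eval_Imp_eq_one_iff[OF w[unfolded All1]]
    using w All1 cINF_lower[OF bdd_below_eval_upd UNIV_I] by (simp add: eval_subst)
next
  case (Ex1 x t a)
  show ?thesis unfolding Ex1 eval_Imp_eq_one_iff[OF w[unfolded Ex1]]
    using w Ex1 cSUP_upper[OF UNIV_I bdd_above_eval_upd] by (simp add: eval_subst)
next
  case (All2 x a b)
  show ?thesis unfolding All2 eval_Imp_eq_one_iff[OF w[unfolded All2]]
    using w All2 INF_residuum_le_residuum_INF[OF eval_closed, of a "\<lambda>d. eval T M (v(x := d)) b"] eval_closed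
    by (simp add: eval_upd_nonfree)
next
  case (Ex2 x a b)
  show ?thesis unfolding Ex2 eval_Imp_eq_one_iff[OF w[unfolded Ex2]]
    using w Ex2 INF_residuum_le_residuum_SUP[OF eval_closed, of a "\<lambda>d. eval T M (v(x := d)) b"] eval_closed
    by (simp add: eval_upd_nonfree)
next
  case (Lin x a b)
  with w have "wff ar a" "wff ar b" by (simp_all add: Disj_def WConj_def)
  then show ?thesis unfolding Lin eval_Imp_eq_one_iff[OF w[unfolded Lin]]
    using Lin INF_max_le_max_INF[OF bdd_below_eval_upd, of b v x "eval T M v a"]
    by (simp add: eval_Disj eval_upd_nonfree)
qed

lemma rc_axiom_valid:
  assumes w: "wff ar \<phi>" and ax: "rc_axiom \<phi>"
  shows "eval T M v \<phi> = 1"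
proof -
  obtain x c where \<phi>: "\<phi> = Imp (All x (SConj c c)) (SConj (All x c) (All x c))"
    using ax unfolding rc_axiom_def by blast
  with w have "wff ar c" by simp
  then show ?thesis unfolding \<phi> eval_Imp_eq_one_iff[OF w[unfolded \<phi>]]
    using INF_comp_le_continuous[OF continuous_on_T_self, of "\<lambda>d. eval T M (v(x := d)) c"]
      eval_closed by simp
qed

lemma Inf_rule_valid:
  assumes w: "wff ar (Disj a (Imp b (SConj b c)))"
    and prems: "\<And>n. n \<ge> 1 \<Longrightarrow> eval T M v (Disj a (Imp b (fpow c n))) = 1"
  shows "eval T M v (Disj a (Imp b (SConj b c))) = 1"
proof -
  from w have wff: "wff ar a" "wff ar b" "wff ar c" by (auto simp: Disj_def WConj_def)
  then have r: "eval T M v a \<in> {0..1}" "eval T M v b \<in> {0..1}" "eval T M v c \<in> {0..1}"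
    by (blast intro: eval_closed)+
  show ?thesis
  proof (cases "eval T M v a = 1")
    case True
    then show ?thesis using wff residuum_closed[OF r(2) T_closed[OF r(2,3)]]
      by (simp add: eval_Disj)
  next
    case False
    have "eval T M v b \<le> tpow T (eval T M v c) n" if "n \<ge> 1" for n
    proof -
      have "max (eval T M v a) (residuum T (eval T M v b) (tpow T (eval T M v c) n)) = 1"
        using prems[OF that] wff wff_fpow[of ar c n] by (simp add: eval_Disj eval_fpow)
      then have "residuum T (eval T M v b) (tpow T (eval T M v c) n) = 1"
        using False by (simp add: max_def split: if_splits)
      then show ?thesis using residuum_eq_one_iff[OF r(2) tpow_closed[OF r(3)]] by simp
    qed
    then have "eval T M v b \<le> T (eval T M v b) (eval T M v c)"
      using le_T_if_le_tpow[OF r(2,3)] by blast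
    then show ?thesis
      using wff r(1) residuum_eq_one_iff[OF r(2) T_closed[OF r(2,3)]] by (simp add: eval_Disj)
  qed
qed

lemma justified_valid:
  assumes w: "wff ar (f i)" and just: "justified G r f i"
    and G: "\<forall>g\<in>G. is_model T M g"
    and earlier: "\<And>j. before r j i \<Longrightarrow> is_model T M (f j)"
  shows "is_model T M (f i)"
  unfolding is_model_def
proof
  fix v
  show "eval T M v (f i) = 1"
    using just unfolding justified_def
  proof (elim disjE exE conjE)
    assume "bl_axiom (f i)"
    then show ?thesis using bl_axiom_valid w by blast
  next
    assume "rc_axiom (f i)"
    then show ?thesis using rc_axiom_valid w by blast
  next
    assume "f i \<in> G"
    then show ?thesis using G unfolding is_model_def by blast
  next
    fix j k
    assume j: "before r j i" and k: "before r k i" and "f k = Imp (f j) (f i)"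
    then have "eval T M v (Imp (f j) (f i)) = 1"
      using earlier[OF k] unfolding is_model_def by metis
    then show ?thesis
      using earlier[OF j] residuum_one_left[OF eval_closed[OF w]] unfolding is_model_def by simp
  next
    fix j x
    assume "before r j i" "f i = All x (f j)"
    then show ?thesis using earlier[unfolded is_model_def] by simp
  next
    fix a b c
    assume "f i = Disj a (Imp b (SConj b c))"
      and "\<forall>n\<ge>1. \<exists>j. before r j i \<and> f j = Disj a (Imp b (fpow c n))"
    then show ?thesis
      using Inf_rule_valid[of a b c v] w earlier[unfolded is_model_def] by metis
  qed
qed

lemma is_proof_valid:
  assumes pf: "is_proof ar G r f a" and G: "\<forall>g\<in>G. is_model T M g"
  shows "is_model T M a"
proof -
  have "wf (r - Id)" using pf unfolding is_proof_def well_order_on_def by blast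
  have lines: "\<And>i. i \<in> Field r \<Longrightarrow> wff ar (f i) \<and> justified G r f i"
    using pf unfolding is_proof_def by blast
  have "is_model T M (f i)" if "i \<in> Field r" for i
    using that
  proof (induction i rule: wf_induct_rule[OF \<open>wf (r - Id)\<close>])
    case (1 i)
    then show ?case
      using justified_valid[OF _ _ G] lines unfolding before_def by (meson DiffI FieldI1 IdD)
  qed
  moreover obtain l where "l \<in> Field r" "f l = a"
    using pf unfolding is_proof_def by blast
  ultimately show ?thesis by blast
qed

end

theorem mainTheorem7:
  fixes ar :: "'p::countable \<Rightarrow> nat"
    and G :: "('c::countable, 'p) fm set"
    and a :: "('c, 'p) fm"
  assumes "\<forall>g\<in>G. wff ar g"
    and "provable TYPE('i) ar G a"
  shows "sem_conseq TYPE('a) ar G a"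
proof -
  obtain r :: "'i rel" and f where pf: "is_proof ar G r f a"
    using assms(2) unfolding provable_def by blast
  show ?thesis unfolding sem_conseq_def
  proof (intro allI impI)
    fix T and M :: "('a, 'c, 'p) struc"
    assume "cont_tnorm T" "is_struc ar M" and G: "\<forall>g\<in>G. is_model T M g"
    then interpret tnorm_structure T ar M by unfold_locales
    show "is_model T M a" using is_proof_valid[OF pf G] .
  qed
qed

end
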